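(* As formal power series in $z$ with coefficients polynomials in $t$, \[ F(t,z)=\sum_{n\ge 0}\sum_{w\in S_n} t^{\operatorname{dep}(w)} z^n = \cfrac{1}{1 - z - \cfrac{tz^2}{1 - 3tz - \cfrac{4t^3 z^2}{1 - 5t^2 z - \cfrac{9t^5 z^2}{1 - 7t^3 z - \cdots}}}}, \] i.e. the $J$-fraction whose $i$-th level ($i\ge 0$) has denominator term $1-(2i+1)t^i z$ and whose numerator linking level $i-1$ to level $i$ ($i\ge1$) is $i^2 t^{2i-1} z^2$.
   Context: $S_0$ consists of the single empty permutation, of depth $0$. For $w\in S_n$, the depth is $\operatorname{dep}(w)=\sum_{i:\,w(i)>i}(w(i)-i)$, i.e. half the total displacement $\sum_{i=1}^n |w(i)-i|$. *)

theory Defs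
  imports "HOL-Combinatorics.Permutations" "HOL-Computational_Algebra.Formal_Power_Series"
          "HOL-Computational_Algebra.Polynomial"
begin

definition dep :: "nat \<Rightarrow> (nat \<Rightarrow> nat) \<Rightarrow> nat" where
  "dep n w = (\<Sum>i\<in>{1..n}. if i < w i then w i - i else 0)"

definition depthGF :: "int poly fps" where
  "depthGF = Abs_fps (\<lambda>n. \<Sum>w\<in>{w. w permutes {1..n}}. monom 1 (dep n w))"

definition jb :: "nat \<Rightarrow> int poly" where
  "jb i = monom (int (2*i+1)) i"

definition jlam :: "nat \<Rightarrow> int poly" where
  "jlam i = monom (int (i^2)) (2*i-1)"

text \<open>Truncated tail of the J-fraction starting at level i with m further levels;
  1/(...) is the formal inverse of a series with constant term 1.\<close>
fun jtail :: "nat \<Rightarrow> nat \<Rightarrow> int poly fps" where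
  "jtail 0 i = fps_right_inverse (1 - fps_const (jb i) * fps_X) 1"
| "jtail (Suc m) i = fps_right_inverse
      (1 - fps_const (jb i) * fps_X - fps_const (jlam (Suc i)) * fps_X^2 * jtail m (Suc i)) 1"

definition jconv :: "nat \<Rightarrow> int poly fps" where
  "jconv k = jtail k 0"

end

theory Submission
  imports Defs
begin

text \<open>The coefficient of \<open>z\<^sup>n\<close> in the \<open>k\<close>-th convergent, for \<open>k \<ge> n\<close>, is the total
  weight of Motzkin paths of length \<open>n\<close> in which a level step at height \<open>h\<close> weighs \<open>b\<^sub>h\<close> and
  an up step from height \<open>h\<close> weighs \<open>\<lambda>\<^sub>h\<^sub>+\<^sub>1\<close> (Flajolet). On the other side, a permutation
  of \<open>{1..n}\<close> is built through partial permutations of \<open>{1..j}\<close>, \<open>j = 0..n\<close>, whose height is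
  the number \<open>h = j - |R|\<close> of unmatched points. Adding \<open>j + 1\<close> raises the depth by the new
  height, and from height \<open>h\<close> there is \<open>1\<close> way to go up, \<open>2h + 1\<close> ways to stay and \<open>h\<^sup>2\<close>
  ways to go down. Rescaling by \<open>t\<^bsup>h(h+1)/2\<^esup>\<close> turns these step weights into
  \<open>1\<close>, \<open>b\<^sub>h\<close> and \<open>\<lambda>\<^sub>h\<^sub>+\<^sub>1\<close>, so both sides satisfy the same recursion.\<close>

section \<open>Convergents as path weights\<close>

text \<open>Total weight of the paths of length \<open>n\<close> from height \<open>h\<close> to \<open>0\<close> that stay at most
  \<open>H\<close>; the steps \<open>h \<rightarrow> h - 1\<close>, \<open>h \<rightarrow> h\<close>, \<open>h \<rightarrow> h + 1\<close> weigh \<open>1\<close>, \<open>b\<^sub>h\<close>, \<open>\<lambda>\<^sub>h\<^sub>+\<^sub>1\<close>.\<close>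

fun path_weight :: "nat \<Rightarrow> nat \<Rightarrow> nat \<Rightarrow> int poly" where
  "path_weight H 0 h = (if h = 0 then 1 else 0)"
| "path_weight H (Suc n) h = (if H < h then 0 else
     (if h = 0 then 0 else path_weight H n (h - 1))
     + jb h * path_weight H n h + jlam (Suc h) * path_weight H n (Suc h))"

definition path_gf :: "nat \<Rightarrow> nat \<Rightarrow> int poly fps" where
  "path_gf H h = Abs_fps (\<lambda>n. path_weight H n h)"

lemma path_gf_above: "H < h \<Longrightarrow> path_gf H h = 0"
proof -
  assume "H < h"
  then have "path_weight H n h = 0" for n by (cases n) auto
  then show ?thesis by (simp add: path_gf_def fps_eq_iff)
qed

lemma path_gf_eq:
  assumes "h \<le> H"
  shows "path_gf H h = (if h = 0 then 1 else fps_X * path_gf H (h - 1))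
    + fps_X * (fps_const (jb h) * path_gf H h + fps_const (jlam (Suc h)) * path_gf H (Suc h))"
    (is "_ = ?rhs")
proof (rule fps_ext)
  show "fps_nth (path_gf H h) n = fps_nth ?rhs n" for n
    using assms by (cases n) (auto simp: path_gf_def)
qed

lemma fps_eq_mult_right_inverse:
  fixes G D Y :: "'a::comm_ring_1 fps"
  assumes "G * D = Y" "fps_nth D 0 = 1"
  shows "G = Y * fps_right_inverse D 1"
proof -
  have "D * fps_right_inverse D 1 = 1"
    using fps_right_inverse[of D 1] assms(2) by simp
  then have "G = G * D * fps_right_inverse D 1" by (simp add: mult.assoc)
  then show ?thesis using assms(1) by simp
qed

lemma path_gf_jtail:
  assumes "d \<le> H"
  shows "path_gf H (H - d) = (if H - d = 0 then 1 else fps_X * path_gf H (H - d - 1)) * jtail d (H - d)"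
  using assms
proof (induction d)
  case 0
  let ?G = "path_gf H"
  have "?G H * (1 - fps_const (jb H) * fps_X) = (if H = 0 then 1 else fps_X * ?G (H - 1))"
    using path_gf_eq[of H H] path_gf_above[of H "Suc H"] by (simp add: algebra_simps)
  from fps_eq_mult_right_inverse[OF this] show ?case by simp
next
  case (Suc d)
  let ?G = "path_gf H" and ?h = "H - Suc d"
  let ?D = "1 - fps_const (jb ?h) * fps_X - fps_const (jlam (Suc ?h)) * fps_X^2 * jtail d (Suc ?h)"
  have "Suc ?h = H - d" using Suc.prems by simp
  then have IH: "?G (Suc ?h) = fps_X * ?G ?h * jtail d (Suc ?h)"
    using Suc by simp
  have "?G ?h * ?D = (if ?h = 0 then 1 else fps_X * ?G (?h - 1))"
    using path_gf_eq[of ?h H] unfolding IH by (simp add: algebra_simps power2_eq_square)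
  from fps_eq_mult_right_inverse[OF this] show ?case by simp
qed

lemma jconv_nth: "fps_nth (jconv H) n = path_weight H n 0"
proof -
  have "jconv H = path_gf H 0"
    using path_gf_jtail[of H H] by (simp add: jconv_def)
  then show ?thesis by (simp add: path_gf_def)
qed


section \<open>Partial permutations and their one-point extensions\<close>

definition partial_perms :: "nat \<Rightarrow> (nat \<times> nat) set set" where
  "partial_perms j = {R. R \<subseteq> {1..j} \<times> {1..j} \<and> single_valued R \<and> single_valued (R\<inverse>)}"

definition restrict_pp :: "nat \<Rightarrow> (nat \<times> nat) set \<Rightarrow> (nat \<times> nat) set" where
  "restrict_pp j R = R \<inter> ({1..j} \<times> {1..j})"

lemma partial_permsD:
  assumes "R \<in> partial_perms j"
  shows "R \<subseteq> {1..j} \<times> {1..j}"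
    and "(i, v) \<in> R \<Longrightarrow> (i, v') \<in> R \<Longrightarrow> v = v'"
    and "(i, v) \<in> R \<Longrightarrow> (i', v) \<in> R \<Longrightarrow> i = i'"
  using assms by (auto simp: partial_perms_def single_valued_def)

lemma partial_permsI:
  assumes "R \<subseteq> {1..j} \<times> {1..j}"
    and "\<And>i v v'. (i, v) \<in> R \<Longrightarrow> (i, v') \<in> R \<Longrightarrow> v = v'"
    and "\<And>i i' v. (i, v) \<in> R \<Longrightarrow> (i', v) \<in> R \<Longrightarrow> i = i'"
  shows "R \<in> partial_perms j"
  using assms by (auto simp: partial_perms_def single_valued_def)

lemma finite_partial_perms: "finite (partial_perms j)"
proof (rule finite_subset)
  show "partial_perms j \<subseteq> Pow ({1..j} \<times> {1..j})" by (auto simp: partial_perms_def)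
qed simp

lemma partial_perms_finite: "R \<in> partial_perms j \<Longrightarrow> finite R"
  using partial_permsD(1) finite_subset by blast

lemma restrict_pp_partial_perms: "R \<in> partial_perms (Suc j) \<Longrightarrow> restrict_pp j R \<in> partial_perms j"
  unfolding restrict_pp_def by (rule partial_permsI) (auto dest: partial_permsD)

lemma card_Domain_pp:
  assumes "R \<in> partial_perms j" shows "card (Domain R) = card R"
proof -
  have "inj_on fst R" using partial_permsD(2)[OF assms] by (force simp: inj_on_def)
  then show ?thesis by (simp add: fst_eq_Domain[symmetric] card_image)
qed

lemma card_Range_pp:
  assumes "R \<in> partial_perms j" shows "card (Range R) = card R"
proof -
  have "inj_on snd R" using partial_permsD(3)[OF assms] by (force simp: inj_on_def)
  then show ?thesis by (simp add: snd_eq_Range[symmetric] card_image)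
qed

definition free_points :: "nat \<Rightarrow> (nat \<times> nat) set \<Rightarrow> nat set" where
  "free_points j R = {1..j} - Domain R"

definition free_values :: "nat \<Rightarrow> (nat \<times> nat) set \<Rightarrow> nat set" where
  "free_values j R = {1..j} - Range R"

lemma card_free_points:
  assumes "R \<in> partial_perms j" shows "card (free_points j R) = j - card R"
proof -
  have "Domain R \<subseteq> {1..j}" using partial_permsD(1)[OF assms] by auto
  then show ?thesis using card_Domain_pp[OF assms] by (simp add: free_points_def card_Diff_subset finite_subset)
qed

lemma card_free_values:
  assumes "R \<in> partial_perms j" shows "card (free_values j R) = j - card R"
proof -
  have "Range R \<subseteq> {1..j}" using partial_permsD(1)[OF assms] by auto
  then show ?thesis using card_Range_pp[OF assms] by (simp add: free_values_def card_Diff_subset finite_subset)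
qed

lemma card_pp_le:
  assumes "R \<in> partial_perms j" shows "card R \<le> j"
proof -
  have "Domain R \<subseteq> {1..j}" using partial_permsD(1)[OF assms] by auto
  then have "card (Domain R) \<le> j" using card_mono[of "{1..j}"] by fastforce
  then show ?thesis using card_Domain_pp[OF assms] by simp
qed

definition single_extensions :: "nat \<Rightarrow> (nat \<times> nat) set \<Rightarrow> (nat \<times> nat) set set" where
  "single_extensions j g = insert (insert (Suc j, Suc j) g)
     ((\<lambda>v. insert (Suc j, v) g) ` free_values j g \<union> (\<lambda>i. insert (i, Suc j) g) ` free_points j g)"

definition double_extensions :: "nat \<Rightarrow> (nat \<times> nat) set \<Rightarrow> (nat \<times> nat) set set" where
  "double_extensions j g =
     (\<lambda>(i, v). insert (i, Suc j) (insert (Suc j, v) g)) ` (free_points j g \<times> free_values j g)"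

context
  fixes j :: nat and g :: "(nat \<times> nat) set"
  assumes g: "g \<in> partial_perms j"
begin

lemma new_point_notin: "(Suc j, v) \<notin> g" and new_value_notin: "(i, Suc j) \<notin> g"
  using partial_permsD(1)[OF g] by auto

lemma free_points_le: "i \<in> free_points j g \<Longrightarrow> i \<le> j"
  and free_values_le: "v \<in> free_values j g \<Longrightarrow> v \<le> j"
  by (auto simp: free_points_def free_values_def)

lemma finite_free_points: "finite (free_points j g)"
  and finite_free_values: "finite (free_values j g)"
  by (auto simp: free_points_def free_values_def)

context
  fixes R assumes R: "R \<in> partial_perms (Suc j)" and restr: "restrict_pp j R = g"
begin

lemma restrict_pp_subset: "g \<subseteq> R"
  using restr by (auto simp: restrict_pp_def)

lemma pair_notin_restrict_pp: "(i, v) \<in> R \<Longrightarrow> (i, v) \<notin> g \<Longrightarrow> i = Suc j \<or> v = Suc j"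
  using partial_permsD(1)[OF R] restr by (force simp: restrict_pp_def)

lemma image_of_new_point:
  assumes "(Suc j, v) \<in> R" "v \<noteq> Suc j" shows "v \<in> free_values j g"
proof -
  have "v \<in> {1..j}" using assms partial_permsD(1)[OF R] by auto
  moreover have "(i, v) \<notin> g" for i
    using assms partial_permsD(3)[OF R, of i v "Suc j"] restrict_pp_subset new_point_notin by blast
  ultimately show ?thesis by (auto simp: free_values_def)
qed

lemma preimage_of_new_value:
  assumes "(i, Suc j) \<in> R" "i \<noteq> Suc j" shows "i \<in> free_points j g"
proof -
  have "i \<in> {1..j}" using assms partial_permsD(1)[OF R] by auto
  moreover have "(i, v) \<notin> g" for v
    using assms partial_permsD(2)[OF R, of i v "Suc j"] restrict_pp_subset new_value_notin by blast
  ultimately show ?thesis by (auto simp: free_points_def)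
qed

lemma extension_cases: "R \<in> insert g (single_extensions j g \<union> double_extensions j g)"
proof -
  note func = partial_permsD(2)[OF R] and inj = partial_permsD(3)[OF R]
  note gR = restrict_pp_subset
  consider (diag) "(Suc j, Suc j) \<in> R"
    | (none) "\<forall>v. (Suc j, v) \<notin> R" "\<forall>i. (i, Suc j) \<notin> R"
    | (out) v where "(Suc j, v) \<in> R" "v \<noteq> Suc j" "\<forall>i. (i, Suc j) \<notin> R"
    | (into) i where "(i, Suc j) \<in> R" "i \<noteq> Suc j" "\<forall>v. (Suc j, v) \<notin> R"
    | (both) i v where "(Suc j, v) \<in> R" "(i, Suc j) \<in> R" "v \<noteq> Suc j" "i \<noteq> Suc j"
    by metis
  then show ?thesis
  proof cases
    case diag
    have "R = insert (Suc j, Suc j) g"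
    proof (intro set_eqI iffI)
      fix p assume "p \<in> R" then show "p \<in> insert (Suc j, Suc j) g"
        using pair_notin_restrict_pp func[of "Suc j" "snd p" "Suc j"] inj[of "fst p" "Suc j" "Suc j"] diag
        by (cases p) auto
    qed (use diag gR in auto)
    then show ?thesis by (simp add: single_extensions_def)
  next
    case none
    have "R = g"
    proof (intro set_eqI iffI)
      fix p assume "p \<in> R" then show "p \<in> g" using pair_notin_restrict_pp none by (cases p) auto
    qed (use gR in auto)
    then show ?thesis by simp
  next
    case (out v)
    have "R = insert (Suc j, v) g"
    proof (intro set_eqI iffI)
      fix p assume "p \<in> R" then show "p \<in> insert (Suc j, v) g"
        using pair_notin_restrict_pp func[of "Suc j" "snd p" v] out by (cases p) auto
    qed (use out gR in auto)
    then show ?thesis using image_of_new_point out by (simp add: single_extensions_def)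
  next
    case (into i)
    have "R = insert (i, Suc j) g"
    proof (intro set_eqI iffI)
      fix p assume "p \<in> R" then show "p \<in> insert (i, Suc j) g"
        using pair_notin_restrict_pp inj[of "fst p" "Suc j" i] into by (cases p) auto
    qed (use into gR in auto)
    then show ?thesis using preimage_of_new_value into by (simp add: single_extensions_def)
  next
    case (both i v)
    have "R = insert (i, Suc j) (insert (Suc j, v) g)"
    proof (intro set_eqI iffI)
      fix p assume "p \<in> R" then show "p \<in> insert (i, Suc j) (insert (Suc j, v) g)"
        using pair_notin_restrict_pp func[of "Suc j" "snd p" v] inj[of "fst p" "Suc j" i] both by (cases p) auto
    qed (use both gR in auto)
    then show ?thesis using image_of_new_point preimage_of_new_value both
      by (auto simp: double_extensions_def)
  qed
qed

end

lemma extensions_in_fibre: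
  "insert g (single_extensions j g \<union> double_extensions j g)
     \<subseteq> {R \<in> partial_perms (Suc j). restrict_pp j R = g}"
proof -
  note gD = partial_permsD[OF g]
  have restrict_g: "restrict_pp j g = g" using gD(1) by (auto simp: restrict_pp_def)
  have "insert (Suc j, Suc j) g \<in> partial_perms (Suc j)"
    using gD new_point_notin new_value_notin by (intro partial_permsI) auto
  moreover have "insert (Suc j, v) g \<in> partial_perms (Suc j)" if "v \<in> free_values j g" for v
    using gD new_point_notin that by (intro partial_permsI) (auto simp: free_values_def)
  moreover have "insert (i, Suc j) g \<in> partial_perms (Suc j)" if "i \<in> free_points j g" for i
    using gD new_value_notin that by (intro partial_permsI) (auto simp: free_points_def)
  moreover have "insert (i, Suc j) (insert (Suc j, v) g) \<in> partial_perms (Suc j)"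
    if "i \<in> free_points j g" "v \<in> free_values j g" for i v
    using gD new_point_notin new_value_notin that
    by (intro partial_permsI) (auto simp: free_points_def free_values_def)
  moreover have "g \<in> partial_perms (Suc j)" using gD by (intro partial_permsI) auto
  moreover have "restrict_pp j (insert (Suc j, v) X) = restrict_pp j X"
    and "restrict_pp j (insert (i, Suc j) X) = restrict_pp j X" for i v X
    by (auto simp: restrict_pp_def)
  ultimately show ?thesis using restrict_g
    by (auto simp: single_extensions_def double_extensions_def)
qed

lemma fibre_eq:
  "{R \<in> partial_perms (Suc j). restrict_pp j R = g} = insert g (single_extensions j g \<union> double_extensions j g)"
  using extension_cases extensions_in_fibre by blast

lemma card_single_extension: "R \<in> single_extensions j g \<Longrightarrow> card R = Suc (card g)"
  using partial_perms_finite[OF g] new_point_notin new_value_notin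
  by (auto simp: single_extensions_def)

lemma card_double_extension: "R \<in> double_extensions j g \<Longrightarrow> card R = Suc (Suc (card g))"
proof -
  assume "R \<in> double_extensions j g"
  then obtain i v where "i \<in> free_points j g" "R = insert (i, Suc j) (insert (Suc j, v) g)"
    by (auto simp: double_extensions_def)
  moreover have "(i, Suc j) \<noteq> (Suc j, v)" if "i \<in> free_points j g" using free_points_le[OF that] by auto
  ultimately show ?thesis using partial_perms_finite[OF g] new_point_notin new_value_notin by auto
qed

lemma card_single_extensions: "card (single_extensions j g) = 2 * (j - card g) + 1"
proof -
  let ?out = "(\<lambda>v. insert (Suc j, v) g) ` free_values j g"
  let ?into = "(\<lambda>i. insert (i, Suc j) g) ` free_points j g"
  have "inj_on (\<lambda>v. insert (Suc j, v) g) (free_values j g)"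
    using new_point_notin by (auto simp: inj_on_def insert_eq_iff)
  moreover have "inj_on (\<lambda>i. insert (i, Suc j) g) (free_points j g)"
    using new_value_notin by (auto simp: inj_on_def insert_eq_iff)
  moreover have "?out \<inter> ?into = {}"
    using new_point_notin free_points_le by (fastforce simp: insert_eq_iff)
  moreover have "insert (Suc j, Suc j) g \<notin> ?out \<union> ?into"
    using new_point_notin free_points_le free_values_le by (fastforce simp: insert_eq_iff)
  ultimately have "card (single_extensions j g) = Suc (card (free_values j g) + card (free_points j g))"
    using finite_free_points finite_free_values
    by (simp add: single_extensions_def card_Un_disjoint card_image)
  then show ?thesis using card_free_points[OF g] card_free_values[OF g] by simp
qed

lemma card_double_extensions: "card (double_extensions j g) = (j - card g)^2"
proof -
  have "inj_on (\<lambda>(i, v). insert (i, Suc j) (insert (Suc j, v) g)) (free_points j g \<times> free_values j g)"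
  proof (rule inj_onI, clarify)
    fix i v i' v'
    assume free: "i \<in> free_points j g" "v \<in> free_values j g" "i' \<in> free_points j g"
      and eq: "insert (i, Suc j) (insert (Suc j, v) g) = insert (i', Suc j) (insert (Suc j, v') g)"
    have "(i, Suc j) \<in> insert (i', Suc j) (insert (Suc j, v') g)"
      and "(Suc j, v) \<in> insert (i', Suc j) (insert (Suc j, v') g)"
      using eq by blast+
    then show "i = i' \<and> v = v'"
      using free free_points_le free_values_le new_point_notin new_value_notin by fastforce
  qed
  then have "card (double_extensions j g) = card (free_points j g) * card (free_values j g)"
    by (simp add: double_extensions_def card_image card_cartesian_product)
  then show ?thesis using card_free_points[OF g] card_free_values[OF g] by (simp add: power2_eq_square)
qed

lemma sum_fibre:
  fixes f :: "nat \<Rightarrow> 'a::comm_semiring_1"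
  shows "(\<Sum>R\<in>{R \<in> partial_perms (Suc j). restrict_pp j R = g}. f (card R)) =
     f (card g) + of_nat (2 * (j - card g) + 1) * f (Suc (card g))
     + of_nat ((j - card g)^2) * f (Suc (Suc (card g)))"
proof -
  let ?S = "single_extensions j g" and ?D = "double_extensions j g"
  have fin: "finite ?S" "finite ?D"
    using finite_free_points finite_free_values by (auto simp: single_extensions_def double_extensions_def)
  have "g \<notin> ?S" "g \<notin> ?D" "?S \<inter> ?D = {}"
    by (fastforce dest: card_single_extension card_double_extension)+
  then have "(\<Sum>R\<in>insert g (?S \<union> ?D). f (card R))
      = f (card g) + (\<Sum>R\<in>?S. f (card R)) + (\<Sum>R\<in>?D. f (card R))"
    using fin by (simp add: sum.union_disjoint add.assoc)
  also have "(\<Sum>R\<in>?S. f (card R)) = of_nat (card ?S) * f (Suc (card g))"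
    by (simp add: card_single_extension)
  also have "(\<Sum>R\<in>?D. f (card R)) = of_nat (card ?D) * f (Suc (Suc (card g)))"
    by (simp add: card_double_extension)
  finally show ?thesis by (simp add: fibre_eq card_single_extensions card_double_extensions)
qed

end


section \<open>Depth of partial permutations\<close>

text \<open>For a permutation \<open>w\<close> this counts the \<open>i \<le> k\<close> with \<open>w i > k\<close>, so summing over \<open>k\<close>
  gives the depth. Unmatched points count as open: they will be matched above \<open>k\<close>.\<close>

definition open_count :: "(nat \<times> nat) set \<Rightarrow> nat \<Rightarrow> nat" where
  "open_count R k = card {i \<in> {1..k}. \<forall>v. (i, v) \<in> R \<longrightarrow> k < v}"

definition pp_depth :: "(nat \<times> nat) set \<Rightarrow> nat \<Rightarrow> nat" where
  "pp_depth R j = (\<Sum>k=1..j. open_count R k)"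

definition depth_poly :: "nat \<Rightarrow> nat \<Rightarrow> int poly" where
  "depth_poly j h = (\<Sum>R\<in>{R \<in> partial_perms j. card R + h = j}. monom 1 (pp_depth R j))"

lemma open_count_restrict_pp:
  assumes R: "R \<in> partial_perms (Suc j)" and "k \<le> j"
  shows "open_count (restrict_pp j R) k = open_count R k"
proof -
  have "(\<forall>v. (i, v) \<in> restrict_pp j R \<longrightarrow> k < v) \<longleftrightarrow> (\<forall>v. (i, v) \<in> R \<longrightarrow> k < v)"
    if "i \<in> {1..k}" for i
    using that assms partial_permsD(1)[OF R] by (force simp: restrict_pp_def)
  then show ?thesis unfolding open_count_def by (metis (mono_tags, lifting) Collect_cong)
qed

lemma open_count_last:
  assumes R: "R \<in> partial_perms (Suc j)" shows "open_count R (Suc j) = Suc j - card R"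
proof -
  have "{i \<in> {1..Suc j}. \<forall>v. (i, v) \<in> R \<longrightarrow> Suc j < v} = free_points (Suc j) R"
    using partial_permsD(1)[OF R] by (force simp: free_points_def)
  then show ?thesis unfolding open_count_def using card_free_points[OF R] by simp
qed

lemma pp_depth_Suc:
  assumes R: "R \<in> partial_perms (Suc j)"
  shows "pp_depth R (Suc j) = pp_depth (restrict_pp j R) j + (Suc j - card R)"
  using open_count_restrict_pp[OF R] open_count_last[OF R] by (simp add: pp_depth_def)

lemma depth_poly_as_sum:
  "depth_poly j h = (\<Sum>g\<in>partial_perms j. if card g + h = j then monom 1 (pp_depth g j) else 0)"
  unfolding depth_poly_def by (simp add: sum.inter_filter finite_partial_perms)

lemma of_nat_mult_monom: "(of_nat k :: 'a::comm_semiring_1 poly) * monom a n = monom (of_nat k * a) n"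
  by (simp add: of_nat_monom mult_monom)

text \<open>With \<open>c = |g|\<close> and \<open>m = j - c\<close> the height of \<open>g\<close>, the three summands on the left are
  the up, level and down moves out of \<open>g\<close>.\<close>

lemma extension_weight:
  assumes "c + m = j"
  shows "monom 1 M * ((if c + h = Suc j then monom 1 h else 0)
      + of_nat (2 * m + 1) * (if Suc c + h = Suc j then monom 1 h else 0)
      + of_nat (m^2) * (if Suc (Suc c) + h = Suc j then monom 1 h else 0))
    = (if h = 0 then 0 else monom 1 h * (if c + (h - 1) = j then monom 1 M else 0))
      + monom (of_nat (2 * h + 1)) h * (if c + h = j then monom 1 M else 0)
      + monom (of_nat ((h + 1)^2)) h * (if c + Suc h = j then monom 1 M else (0::int poly))"
proof -
  consider "h = Suc m" | "h = m" | "Suc h = m" | "h \<noteq> Suc m" "h \<noteq> m" "Suc h \<noteq> m" by blast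
  then show ?thesis
    by cases (use assms in \<open>auto simp: of_nat_mult_monom mult_monom add.commute
      simp del: of_nat_add of_nat_Suc of_nat_mult of_nat_power\<close>)
qed

lemma depth_poly_Suc:
  "depth_poly (Suc j) h = (if h = 0 then 0 else monom 1 h * depth_poly j (h - 1))
    + monom (of_nat (2 * h + 1)) h * depth_poly j h
    + monom (of_nat ((h + 1)^2)) h * depth_poly j (Suc h)"
proof -
  define \<phi> where "\<phi> c = (if c + h = Suc j then monom 1 h else (0::int poly))" for c
  have "depth_poly (Suc j) h
      = (\<Sum>R\<in>partial_perms (Suc j). monom 1 (pp_depth (restrict_pp j R) j) * \<phi> (card R))"
    unfolding depth_poly_as_sum
  proof (rule sum.cong[OF refl])
    fix R assume R: "R \<in> partial_perms (Suc j)"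
    show "(if card R + h = Suc j then monom 1 (pp_depth R (Suc j)) else 0)
        = monom 1 (pp_depth (restrict_pp j R) j) * \<phi> (card R)"
    proof (cases "card R + h = Suc j")
      case True
      then have "pp_depth R (Suc j) = pp_depth (restrict_pp j R) j + h"
        using pp_depth_Suc[OF R] by simp
      then show ?thesis using True by (simp add: \<phi>_def mult_monom)
    qed (simp add: \<phi>_def)
  qed
  also have "\<dots> = (\<Sum>g\<in>partial_perms j. \<Sum>R\<in>{R \<in> partial_perms (Suc j). restrict_pp j R = g}.
      monom 1 (pp_depth (restrict_pp j R) j) * \<phi> (card R))"
    by (rule sum.group[symmetric]) (auto simp: finite_partial_perms restrict_pp_partial_perms)
  also have "\<dots> = (\<Sum>g\<in>partial_perms j. monom 1 (pp_depth g j) *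
      (\<phi> (card g) + of_nat (2 * (j - card g) + 1) * \<phi> (Suc (card g))
       + of_nat ((j - card g)^2) * \<phi> (Suc (Suc (card g)))))"
    by (intro sum.cong refl) (simp add: sum_distrib_left[symmetric] sum_fibre)
  also have "\<dots> = (\<Sum>g\<in>partial_perms j.
        (if h = 0 then 0 else monom 1 h * (if card g + (h - 1) = j then monom 1 (pp_depth g j) else 0))
      + monom (of_nat (2 * h + 1)) h * (if card g + h = j then monom 1 (pp_depth g j) else 0)
      + monom (of_nat ((h + 1)^2)) h * (if card g + Suc h = j then monom 1 (pp_depth g j) else 0))"
    unfolding \<phi>_def by (intro sum.cong refl extension_weight) (simp add: card_pp_le)
  also have "\<dots> = (if h = 0 then 0 else monom 1 h * depth_poly j (h - 1))
    + monom (of_nat (2 * h + 1)) h * depth_poly j h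
    + monom (of_nat ((h + 1)^2)) h * depth_poly j (Suc h)"
    unfolding depth_poly_as_sum by (simp add: sum.distrib sum_distrib_left)
  finally show ?thesis .
qed

fun triangle :: "nat \<Rightarrow> nat" where
  "triangle 0 = 0"
| "triangle (Suc h) = triangle h + Suc h"

lemma depth_poly_0: "depth_poly 0 h = (if h = 0 then 1 else 0)"
proof -
  have "{R \<in> partial_perms 0. card R + h = 0} = (if h = 0 then {{}} else {})"
    by (auto simp: partial_perms_def)
  then show ?thesis by (simp add: depth_poly_def pp_depth_def)
qed

lemma depth_poly_above: "j < h \<Longrightarrow> depth_poly j h = 0"
  unfolding depth_poly_def by (rule sum.neutral) auto

lemma depth_poly_eq_path_weight:
  "j \<le> H \<Longrightarrow> depth_poly j h = monom 1 (triangle h) * path_weight H j h"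
proof (induction j arbitrary: h)
  case 0
  then show ?case by (simp add: depth_poly_0)
next
  case (Suc j)
  show ?case
  proof (cases "H < h")
    case True
    then show ?thesis using Suc.prems by (simp add: depth_poly_above)
  next
    case False
    have down: "h \<noteq> 0 \<Longrightarrow> monom 1 h * monom 1 (triangle (h - 1)) = (monom 1 (triangle h) :: int poly)"
      by (cases h) (simp_all add: mult_monom add.commute)
    have level: "monom (of_nat (2 * h + 1)) h * monom 1 (triangle h) = monom 1 (triangle h) * jb h"
      by (simp add: jb_def mult_monom add.commute)
    have up: "monom (of_nat ((h + 1)^2)) h * monom 1 (triangle (Suc h)) = monom 1 (triangle h) * jlam (Suc h)"
      by (simp add: jlam_def mult_monom mult_2 add_ac)
    have "depth_poly (Suc j) h
        = (if h = 0 then 0 else monom 1 h * monom 1 (triangle (h - 1)) * path_weight H j (h - 1))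
          + monom (of_nat (2 * h + 1)) h * monom 1 (triangle h) * path_weight H j h
          + monom (of_nat ((h + 1)^2)) h * monom 1 (triangle (Suc h)) * path_weight H j (Suc h)"
      using Suc by (simp add: depth_poly_Suc mult.assoc)
    also have "\<dots> = monom 1 (triangle h) * path_weight H (Suc j) h"
      unfolding level up using down False by (simp add: algebra_simps)
    finally show ?thesis .
  qed
qed


section \<open>Permutations\<close>

definition perm_graph :: "nat \<Rightarrow> (nat \<Rightarrow> nat) \<Rightarrow> (nat \<times> nat) set" where
  "perm_graph n w = (\<lambda>i. (i, w i)) ` {1..n}"

lemma mem_perm_graph: "(i, v) \<in> perm_graph n w \<longleftrightarrow> i \<in> {1..n} \<and> v = w i"
  unfolding perm_graph_def by auto

lemma perm_graph_partial_perms: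
  assumes "w permutes {1..n}" shows "perm_graph n w \<in> partial_perms n"
proof (rule partial_permsI)
  have "w i \<in> {1..n}" if "i \<in> {1..n}" for i
    using permutes_in_image[OF assms] that by simp
  then show "perm_graph n w \<subseteq> {1..n} \<times> {1..n}"
    by (auto simp: perm_graph_def)
  show "v = v'" if "(i, v) \<in> perm_graph n w" "(i, v') \<in> perm_graph n w" for i v v'
    using that unfolding mem_perm_graph by simp
  show "i = i'" if "(i, v) \<in> perm_graph n w" "(i', v) \<in> perm_graph n w" for i i' v
  proof -
    have "w i = w i'" using that unfolding mem_perm_graph by simp
    then show ?thesis using permutes_inj[OF assms] by (rule injD[rotated])
  qed
qed

lemma card_perm_graph: "card (perm_graph n w) = n"
proof -
  have "inj_on (\<lambda>i. (i, w i)) {1..n}" by (rule inj_onI) auto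
  then show ?thesis by (simp add: perm_graph_def card_image)
qed

lemma inj_on_perm_graph: "inj_on (perm_graph n) {w. w permutes {1..n}}"
proof (rule inj_onI, rule ext)
  fix w w' i
  assume w: "w \<in> {w. w permutes {1..n}}" and w': "w' \<in> {w. w permutes {1..n}}"
    and eq: "perm_graph n w = perm_graph n w'"
  show "w i = w' i"
  proof (cases "i \<in> {1..n}")
    case True
    then have "(i, w i) \<in> perm_graph n w" by (simp add: mem_perm_graph)
    then show ?thesis unfolding eq by (simp add: mem_perm_graph)
  next
    case False
    then show ?thesis using w w' by (simp add: permutes_not_in)
  qed
qed

lemma perm_graph_surj:
  assumes R: "R \<in> partial_perms n" and card: "card R = n"
  obtains w where "w permutes {1..n}" "perm_graph n w = R"
proof -
  note RD = partial_permsD[OF R]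
  have "Domain R \<subseteq> {1..n}" using RD(1) by auto
  then have dom: "Domain R = {1..n}"
    using card_Domain_pp[OF R] card by (intro card_subset_eq) auto
  define w where "w i = (if i \<in> {1..n} then THE v. (i, v) \<in> R else i)" for i
  have wR: "(i, w i) \<in> R" if "i \<in> {1..n}" for i
  proof -
    have "i \<in> Domain R" using dom that by simp
    then obtain v where v: "(i, v) \<in> R" by blast
    then have "(THE v. (i, v) \<in> R) = v" using RD(2) by (intro the_equality)
    then show ?thesis using v that by (simp add: w_def)
  qed
  have graph: "perm_graph n w = R"
  proof (intro set_eqI iffI)
    fix p assume "p \<in> perm_graph n w" then show "p \<in> R" using wR by (auto simp: perm_graph_def)
  next
    fix p assume p: "p \<in> R"
    then have i: "fst p \<in> {1..n}" using RD(1) by auto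
    then have "snd p = w (fst p)" using RD(2)[of "fst p" "snd p"] p wR by simp
    then show "p \<in> perm_graph n w" using i by (cases p) (simp add: mem_perm_graph)
  qed
  have "inj_on w {1..n}"
  proof (rule inj_onI)
    fix i i' assume "i \<in> {1..n}" "i' \<in> {1..n}" "w i = w i'"
    then show "i = i'" using wR[of i] wR[of i'] RD(3) by metis
  qed
  moreover have "w ` {1..n} \<subseteq> {1..n}" using wR RD(1) by blast
  ultimately have "bij_betw w {1..n} {1..n}" by (simp add: bij_betw_def endo_inj_surj)
  then have "w permutes {1..n}" by (rule bij_imp_permutes) (simp add: w_def del: atLeastAtMost_iff)
  then show ?thesis using graph that by blast
qed

lemma bij_betw_perm_graph:
  "bij_betw (perm_graph n) {w. w permutes {1..n}} {R \<in> partial_perms n. card R = n}"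
proof (rule bij_betw_imageI)
  show "perm_graph n ` {w. w permutes {1..n}} = {R \<in> partial_perms n. card R = n}"
  proof
    show "perm_graph n ` {w. w permutes {1..n}} \<subseteq> {R \<in> partial_perms n. card R = n}"
      using perm_graph_partial_perms card_perm_graph by auto
    show "{R \<in> partial_perms n. card R = n} \<subseteq> perm_graph n ` {w. w permutes {1..n}}"
    proof
      fix R assume "R \<in> {R \<in> partial_perms n. card R = n}"
      then obtain w where "w permutes {1..n}" "perm_graph n w = R"
        using perm_graph_surj by blast
      then show "R \<in> perm_graph n ` {w. w permutes {1..n}}" by blast
    qed
  qed
qed (rule inj_on_perm_graph)

lemma pp_depth_perm_graph:
  assumes w: "w permutes {1..n}" shows "pp_depth (perm_graph n w) n = dep n w"
proof -
  have crossing: "open_count (perm_graph n w) k = (\<Sum>i=1..n. if i \<le> k \<and> k < w i then 1 else 0)"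
    if "k \<in> {1..n}" for k
  proof -
    have "{i \<in> {1..k}. \<forall>v. (i, v) \<in> perm_graph n w \<longrightarrow> k < v} = {i \<in> {1..n}. i \<le> k \<and> k < w i}"
      using that by (auto simp: mem_perm_graph)
    then show ?thesis
      using sum.inter_filter[of "{1..n}" "\<lambda>_. 1::nat" "\<lambda>i. i \<le> k \<and> k < w i"]
      by (simp add: open_count_def)
  qed
  have arc: "(\<Sum>k=1..n. if i \<le> k \<and> k < w i then 1 else 0) = (if i < w i then w i - i else 0)"
    if "i \<in> {1..n}" for i
  proof -
    have "w i \<le> n" using permutes_in_image[OF w, of i] that by simp
    then have "{k \<in> {1..n}. i \<le> k \<and> k < w i} = {i..<w i}" using that by auto
    then show ?thesis
      using sum.inter_filter[of "{1..n}" "\<lambda>_. 1::nat" "\<lambda>k. i \<le> k \<and> k < w i"] by simp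
  qed
  have "pp_depth (perm_graph n w) n = (\<Sum>k=1..n. \<Sum>i=1..n. if i \<le> k \<and> k < w i then 1 else 0)"
    unfolding pp_depth_def using crossing by (intro sum.cong) auto
  also have "\<dots> = (\<Sum>i=1..n. \<Sum>k=1..n. if i \<le> k \<and> k < w i then 1 else 0)"
    by (rule sum.swap)
  also have "\<dots> = dep n w"
    unfolding dep_def using arc by (intro sum.cong) auto
  finally show ?thesis .
qed

theorem mainTheorem4:
  shows "\<forall>n. \<exists>K. \<forall>k\<ge>K. fps_nth (jconv k) n = fps_nth depthGF n"
proof (intro allI exI impI)
  fix n k :: nat assume "n \<le> k"
  have "fps_nth (jconv k) n = path_weight k n 0" by (rule jconv_nth)
  also have "\<dots> = depth_poly n 0" using depth_poly_eq_path_weight[OF \<open>n \<le> k\<close>, of 0] by simp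
  also have "\<dots> = (\<Sum>R\<in>{R \<in> partial_perms n. card R = n}. monom 1 (pp_depth R n))"
    by (simp add: depth_poly_def)
  also have "\<dots> = (\<Sum>w\<in>{w. w permutes {1..n}}. monom 1 (pp_depth (perm_graph n w) n))"
    by (rule sum.reindex_bij_betw[OF bij_betw_perm_graph, symmetric])
  also have "\<dots> = fps_nth depthGF n"
    by (simp add: depthGF_def pp_depth_perm_graph)
  finally show "fps_nth (jconv k) n = fps_nth depthGF n" .
qed

end
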